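(* Let $q(k)=Q[q_{0,0}(k)]$ for $k\in\mathbb N$. Then for all $s\in[0,1]$ and $t\in\mathbb N$, $$P[s^{|B_t|}]\ge(\underbrace{\hat q\circ\cdots\circ\hat q}_{t})(s).$$
   Context: BRWRE on $\mathbb Z^d$, with $\mathbb N=\{0,1,\dots\}$. The environment $\mathbf q=(q_{t,x})_{(t,x)\in\mathbb N\times\mathbb Z^d}$ consists of probability measures on $\mathbb N$, i.i.d. under $Q$. Given $\mathbf q$, under $P^{\mathbf q}$ one particle starts at the origin at time $0$. A particle at $(t,x)$ jumps to a uniformly chosen nearest neighbour of $x$ and there dies, leaving $k$ children with probability $q_{t,x}(k)$; all independently. $B_t$ is the set of particles at time $t$, and $P=\int Q(d\mathbf q)P^{\mathbf q}$. For a probability measure $q$ on $\mathbb N$, $\hat q(s)=\sum_{k\ge0}s^kq(k)$ (with $0^0=1$). *)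

theory Defs
  imports "HOL-Probability.Probability"
begin

text \<open>Lattice Z^d is modelled as int^'d for a finite index type 'd (d = CARD('d)).\<close>

definition nbr_steps :: "((int ^ 'd)) set" where
  "nbr_steps = range (\<lambda>i. axis i 1) \<union> range (\<lambda>i. - axis i 1)"

definition offspring_measure :: "(nat \<Rightarrow> real) \<Rightarrow> nat measure" where
  "offspring_measure p = density (count_space UNIV) (\<lambda>k. ennreal (p k))"

text \<open>Quenched law P^q: for every space-time point (t,x) and every index i
  (the i-th particle at (t,x)) an independent pair (jump, number of children),
  the jump uniform on the 2d unit steps, the number of children with law q_{t,x}.\<close>
definition quenched_law ::
  "(nat \<times> (int ^ 'd) \<Rightarrow> nat \<Rightarrow> real) \<Rightarrow> (nat \<times> (int ^ 'd) \<times> nat \<Rightarrow> (int ^ 'd) \<times> nat) measure" where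
  "quenched_law q = PiM UNIV (\<lambda>(t, x, i).
      measure_pmf (pmf_of_set nbr_steps) \<Otimes>\<^sub>M offspring_measure (q (t, x)))"

primrec occ :: "(nat \<times> (int ^ 'd) \<times> nat \<Rightarrow> (int ^ 'd) \<times> nat) \<Rightarrow> nat \<Rightarrow> (int ^ 'd) \<Rightarrow> nat" where
  "occ \<omega> 0 = (\<lambda>x. if x = 0 then 1 else 0)"
| "occ \<omega> (Suc t) = (\<lambda>y. \<Sum>x\<in>{x. occ \<omega> t x \<noteq> 0}. \<Sum>i<occ \<omega> t x.
      (if x + fst (\<omega> (t, x, i)) = y then snd (\<omega> (t, x, i)) else 0))"

definition pop :: "(nat \<times> (int ^ 'd) \<times> nat \<Rightarrow> (int ^ 'd) \<times> nat) \<Rightarrow> nat \<Rightarrow> nat" where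
  "pop \<omega> t = (\<Sum>x\<in>{x. occ \<omega> t x \<noteq> 0}. occ \<omega> t x)"

definition annealed_gf ::
  "(nat \<times> (int ^ 'd) \<Rightarrow> nat \<Rightarrow> real) measure \<Rightarrow> nat \<Rightarrow> real \<Rightarrow> ennreal" where
  "annealed_gf Q t s =
     (\<integral>\<^sup>+ q. (\<integral>\<^sup>+ \<omega>. ennreal (s ^ pop \<omega> t) \<partial>quenched_law q) \<partial>Q)"

definition mean_offspring :: "(nat \<times> (int ^ 'd) \<Rightarrow> nat \<Rightarrow> real) measure \<Rightarrow> nat \<Rightarrow> real" where
  "mean_offspring Q k = (\<integral> q. q (0, 0) k \<partial>Q)"

text \<open>Generating function hat q(s) = sum_k s^k q(k) (with 0^0 = 1).\<close>
definition pgf :: "(nat \<Rightarrow> real) \<Rightarrow> real \<Rightarrow> real" where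
  "pgf p s = (\<Sum>k. s ^ k * p k)"

end

theory Submission
  imports Defs "HOL-Library.Function_Algebras"
begin

text \<open>Write \<open>g\<close> for the generating function of the averaged offspring law and \<open>\<phi>(q)\<close> for
  that of a single law \<open>q\<close>. Realise \<open>P\<^sup>q\<close> as the image of one fixed noise (uniform jumps, and
  uniform variables turned into offspring numbers by the quantile transform of \<open>q\<^sub>t\<^sub>,\<^sub>x\<close>), so that
  environment and noise live on one product space. Given everything before time \<open>t\<close>, the
  variable \<open>s ^ |B\<^sub>t\<^sub>+\<^sub>1|\<close> is a product over the particles alive at time \<open>t\<close>; distinct sites
  see independent environments, and a site carrying \<open>n\<close> particles contributes
  \<open>Q[\<phi>(q) ^ n] \<ge> Q[\<phi>(q)] ^ n = g(s) ^ n\<close> by Jensen. Hence \<open>P[g(s) ^ |B\<^sub>t|] \<le> P[s ^ |B\<^sub>t\<^sub>+\<^sub>1|]\<close>,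
  and as \<open>g\<^sup>t\<^sup>+\<^sup>1(s) = g\<^sup>t(g(s))\<close>, induction on \<open>t\<close> gives \<open>g\<^sup>t(s) \<le> P[s ^ |B\<^sub>t|]\<close>.\<close>

section \<open>Product measures\<close>

lemma indep_vars_PiM_components:
  assumes M: "\<And>i. i \<in> I \<Longrightarrow> prob_space (M i)" and I: "I \<noteq> {}"
  shows "prob_space.indep_vars (PiM I M) M (\<lambda>i \<omega>. \<omega> i) I"
proof -
  interpret P: prob_space "PiM I M" using M by (rule prob_space_PiM)
  have "distr (PiM I M) (PiM I M) (\<lambda>x. \<lambda>i\<in>I. x i) = distr (PiM I M) (PiM I M) (\<lambda>x. x)"
    by (rule distr_cong) (auto simp: space_PiM)
  also have "\<dots> = PiM I M" by simp
  also have "\<dots> = PiM I (\<lambda>i. distr (PiM I M) (M i) (\<lambda>\<omega>. \<omega> i))"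
    by (rule PiM_cong) (auto simp: distr_PiM_component M)
  finally show ?thesis
    by (subst P.indep_vars_iff_distr_eq_PiM'[OF I]) auto
qed

lemma distr_PiM_restrict:
  assumes M: "\<And>i. i \<in> I \<Longrightarrow> prob_space (M i)" and J: "J \<subseteq> I"
  shows "distr (PiM I M) (PiM J M) (\<lambda>\<omega>. restrict \<omega> J) = PiM J M"
proof -
  have "id \<in> J \<rightarrow> I" using J by auto
  then show ?thesis using distr_PiM_reindex[of I M id J] M J by (auto simp: restrict_def)
qed

lemma nn_integral_PiM_restrict:
  assumes M: "\<And>i. i \<in> I \<Longrightarrow> prob_space (M i)" and J: "J \<subseteq> I"
    and h: "h \<in> borel_measurable (PiM J M)"
  shows "(\<integral>\<^sup>+\<omega>. h (restrict \<omega> J) \<partial>PiM I M) = (\<integral>\<^sup>+a. h a \<partial>PiM J M)"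
proof -
  have "(\<integral>\<^sup>+\<omega>. h (restrict \<omega> J) \<partial>PiM I M)
      = (\<integral>\<^sup>+a. h a \<partial>distr (PiM I M) (PiM J M) (\<lambda>\<omega>. restrict \<omega> J))"
    by (subst nn_integral_distr) (use h J in \<open>auto intro!: measurable_restrict_subset\<close>)
  then show ?thesis by (simp add: distr_PiM_restrict[OF M J])
qed

lemma nn_integral_PiM_split:
  assumes M: "\<And>i. i \<in> I \<Longrightarrow> prob_space (M i)" and J: "J \<subseteq> I" and I: "I \<noteq> {}"
    and h: "h \<in> borel_measurable (PiM J M \<Otimes>\<^sub>M PiM (I - J) M)"
  shows "(\<integral>\<^sup>+\<omega>. h (restrict \<omega> J, restrict \<omega> (I - J)) \<partial>PiM I M)
       = (\<integral>\<^sup>+a. \<integral>\<^sup>+b. h (a, b) \<partial>PiM (I - J) M \<partial>PiM J M)"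
proof -
  interpret P: prob_space "PiM I M" using M by (rule prob_space_PiM)
  interpret PJ': prob_space "PiM (I - J) M" using M by (intro prob_space_PiM) auto
  have ind: "P.indep_var (PiM J M) (\<lambda>\<omega>. restrict (\<lambda>i. \<omega> i) J)
      (PiM (I - J) M) (\<lambda>\<omega>. restrict (\<lambda>i. \<omega> i) (I - J))"
    by (rule P.indep_var_restrict[OF indep_vars_PiM_components[OF M I]]) (use J in auto)
  have "distr (PiM I M) (PiM J M \<Otimes>\<^sub>M PiM (I - J) M) (\<lambda>\<omega>. (restrict \<omega> J, restrict \<omega> (I - J)))
      = PiM J M \<Otimes>\<^sub>M PiM (I - J) M"
    using ind[unfolded P.indep_var_distribution_eq]
    by (simp add: distr_PiM_restrict[OF M J] distr_PiM_restrict[of I M "I - J"] M)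
  moreover have "(\<integral>\<^sup>+\<omega>. h (restrict \<omega> J, restrict \<omega> (I - J)) \<partial>PiM I M)
      = (\<integral>\<^sup>+z. h z \<partial>distr (PiM I M) (PiM J M \<Otimes>\<^sub>M PiM (I - J) M)
                         (\<lambda>\<omega>. (restrict \<omega> J, restrict \<omega> (I - J))))"
    by (subst nn_integral_distr) (use h J in \<open>auto intro!: measurable_Pair measurable_restrict_subset\<close>)
  ultimately show ?thesis
    using PJ'.nn_integral_fst[OF h] by simp
qed

lemma nn_integral_PiM_prod:
  assumes M: "\<And>i. i \<in> I \<Longrightarrow> prob_space (M i)" and D: "finite D" "D \<subseteq> I"
    and f: "\<And>i. i \<in> D \<Longrightarrow> f i \<in> borel_measurable (M i)"
  shows "(\<integral>\<^sup>+\<omega>. (\<Prod>i\<in>D. f i (\<omega> i)) \<partial>PiM I M) = (\<Prod>i\<in>D. \<integral>\<^sup>+x. f i x \<partial>M i)"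
proof (cases "D = {}")
  case True
  interpret P: prob_space "PiM I M" using M by (rule prob_space_PiM)
  show ?thesis using True P.emeasure_space_1 by simp
next
  case False
  then have I: "I \<noteq> {}" using D(2) by blast
  interpret P: prob_space "PiM I M" using M by (rule prob_space_PiM)
  have ind: "P.indep_vars (\<lambda>_. borel) (\<lambda>i \<omega>. f i (\<omega> i)) D"
    by (rule P.indep_vars_compose2[OF P.indep_vars_subset[OF indep_vars_PiM_components[OF M I] D(2)]])
       (use f in auto)
  have "(\<integral>\<^sup>+\<omega>. (\<Prod>i\<in>D. f i (\<omega> i)) \<partial>PiM I M) = (\<Prod>i\<in>D. \<integral>\<^sup>+\<omega>. f i (\<omega> i) \<partial>PiM I M)"
    by (rule P.indep_vars_nn_integral[OF D(1) ind]) auto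
  also have "\<dots> = (\<Prod>i\<in>D. \<integral>\<^sup>+x. f i x \<partial>M i)"
  proof (rule prod.cong[OF refl])
    fix i assume i: "i \<in> D"
    have "(\<integral>\<^sup>+\<omega>. f i (\<omega> i) \<partial>PiM I M) = (\<integral>\<^sup>+x. f i x \<partial>distr (PiM I M) (M i) (\<lambda>\<omega>. \<omega> i))"
      by (subst nn_integral_distr) (use i D f in auto)
    then show "(\<integral>\<^sup>+\<omega>. f i (\<omega> i) \<partial>PiM I M) = (\<integral>\<^sup>+x. f i x \<partial>M i)"
      using i D by (simp add: distr_PiM_component M subset_iff)
  qed
  finally show ?thesis .
qed

lemma measurable_component_PiM:
  assumes "undefined \<in> space (M i)"
  shows "(\<lambda>x. x i) \<in> measurable (PiM I M) (M i)"
proof (cases "i \<in> I")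
  case False
  have "(\<lambda>x. x i) \<in> measurable (PiM I M) (M i) \<longleftrightarrow> (\<lambda>x. undefined) \<in> measurable (PiM I M) (M i)"
    by (rule measurable_cong) (use False in \<open>auto simp: space_PiM PiE_def extensional_def\<close>)
  then show ?thesis using assms by (simp add: measurable_const)
qed simp

lemma measurable_Pair_countable:
  fixes f :: "'m \<Rightarrow> 'a::countable" and g :: "'m \<Rightarrow> 'b::countable"
  assumes "f \<in> measurable M (count_space UNIV)" "g \<in> measurable M (count_space UNIV)"
  shows "(\<lambda>m. (f m, g m)) \<in> measurable M (count_space UNIV)"
proof -
  have "(\<lambda>m. (f m, g m)) \<in> measurable M (count_space UNIV \<Otimes>\<^sub>M count_space UNIV)"
    using assms by (rule measurable_Pair)
  then show ?thesis by (simp add: pair_measure_countable)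
qed

section \<open>Jensen's inequality for powers\<close>

lemma power_ge_tangent:
  fixes x m :: real
  assumes "0 \<le> x" "0 \<le> m"
  shows "m ^ n + real n * m ^ (n - 1) * (x - m) \<le> x ^ n"
proof (cases n)
  case (Suc k)
  have eq: "x ^ Suc k - m ^ Suc k = (x - m) * (\<Sum>i<Suc k. x ^ i * m ^ (k - i))"
    by (rule diff_power_eq_sum)
  have m_pow: "m ^ k = m ^ i * m ^ (k - i)" if "i < Suc k" for i
    using that by (simp add: power_add[symmetric])
  have "(x - m) * (real (Suc k) * m ^ k) \<le> (x - m) * (\<Sum>i<Suc k. x ^ i * m ^ (k - i))"
  proof (cases "m \<le> x")
    case True
    have "(\<Sum>i<Suc k. m ^ k) \<le> (\<Sum>i<Suc k. x ^ i * m ^ (k - i))"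
      using True assms by (intro sum_mono) (auto simp: m_pow intro!: mult_right_mono power_mono)
    then show ?thesis using True by (intro mult_left_mono) auto
  next
    case False
    have "(\<Sum>i<Suc k. x ^ i * m ^ (k - i)) \<le> (\<Sum>i<Suc k. m ^ k)"
      using False assms by (intro sum_mono) (auto simp: m_pow intro!: mult_right_mono power_mono)
    then show ?thesis using False by (intro mult_left_mono_neg) auto
  qed
  then show ?thesis using eq Suc by (simp add: algebra_simps)
qed simp

lemma power_nn_integral_le:
  assumes M: "prob_space M" and f: "f \<in> borel_measurable M"
    and le: "\<And>x. x \<in> space M \<Longrightarrow> f x \<le> 1"
  shows "(\<integral>\<^sup>+x. f x \<partial>M) ^ n \<le> (\<integral>\<^sup>+x. f x ^ n \<partial>M)"
proof -
  interpret prob_space M by fact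
  define X where "X x = enn2real (f x)" for x
  have fX: "f x = ennreal (X x)" if "x \<in> space M" for x
    using le[OF that] by (auto simp: X_def ennreal_enn2real_if top_unique)
  have X01: "0 \<le> X x" "X x \<le> 1" if "x \<in> space M" for x
    using le[OF that] by (auto simp: X_def enn2real_leI)
  have [measurable]: "X \<in> borel_measurable M" unfolding X_def using f by measurable
  have intX: "integrable M X"
    by (rule integrable_const_bound[where B=1]) (use X01 in auto)
  have intXn: "integrable M (\<lambda>x. X x ^ n)"
    by (rule integrable_const_bound[where B=1]) (use X01 in \<open>auto intro: power_le_one\<close>)
  define m where "m = expectation X"
  have m0: "0 \<le> m" unfolding m_def using X01 by (intro integral_nonneg_AE) auto
  have "(\<integral>\<^sup>+x. f x \<partial>M) = ennreal m"
    unfolding m_def using X01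
    by (subst nn_integral_eq_integral[OF intX, symmetric]) (auto intro!: nn_integral_cong simp: fX)
  moreover have "(\<integral>\<^sup>+x. f x ^ n \<partial>M) = ennreal (expectation (\<lambda>x. X x ^ n))"
    using X01
    by (subst nn_integral_eq_integral[OF intXn, symmetric])
       (auto intro!: nn_integral_cong simp: fX ennreal_power)
  moreover have "m ^ n \<le> expectation (\<lambda>x. X x ^ n)"
  proof -
    have "m ^ n = expectation (\<lambda>x. m ^ n + real n * m ^ (n - 1) * (X x - m))"
      using intX by (simp add: m_def prob_space)
    also have "\<dots> \<le> expectation (\<lambda>x. X x ^ n)"
      by (rule integral_mono) (use intX intXn X01 m0 power_ge_tangent in auto)
    finally show ?thesis .
  qed
  ultimately show ?thesis using m0 by (simp add: ennreal_power ennreal_leI)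
qed

section \<open>Sampling a law on \<open>\<nat>\<close> by the quantile transform\<close>

definition is_distribution :: "(nat \<Rightarrow> real) \<Rightarrow> bool" where
  "is_distribution p \<longleftrightarrow> (\<forall>k. 0 \<le> p k) \<and> p sums 1"

definition unif01 :: "real measure" where
  "unif01 = uniform_measure lborel {0<..<1}"

definition cumulative :: "(nat \<Rightarrow> real) \<Rightarrow> nat \<Rightarrow> real" where
  "cumulative p n = (\<Sum>j<n. p j)"

definition quantile :: "(nat \<Rightarrow> real) \<Rightarrow> real \<Rightarrow> nat" where
  "quantile p v = (LEAST k. v < cumulative p (Suc k))"

lemma prob_space_unif01: "prob_space unif01"
  unfolding unif01_def by (rule prob_space_uniform_measure) auto

lemma sets_unif01 [simp, measurable_cong]: "sets unif01 = sets borel"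
  by (simp add: unif01_def)

lemma space_unif01 [simp]: "space unif01 = UNIV"
  by (simp add: unif01_def)

lemma emeasure_unif01:
  "A \<in> sets borel \<Longrightarrow> emeasure unif01 A = emeasure lborel ({0<..<1} \<inter> A)"
  by (simp add: unif01_def divide_ennreal_def)

lemma cumulative_Suc: "cumulative p (Suc k) = cumulative p k + p k"
  by (simp add: cumulative_def)

lemma cumulative_mono: "(\<forall>k. 0 \<le> p k) \<Longrightarrow> m \<le> n \<Longrightarrow> cumulative p m \<le> cumulative p n"
  unfolding cumulative_def by (intro sum_mono2) auto

lemma cumulative_tendsto: "p sums 1 \<Longrightarrow> cumulative p \<longlonglongrightarrow> 1"
  by (simp add: sums_def cumulative_def[abs_def])

lemma cumulative_le_1:
  assumes "is_distribution p" shows "cumulative p n \<le> 1"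
proof (rule incseq_le)
  show "incseq (cumulative p)" using assms by (auto simp: incseq_def is_distribution_def intro: cumulative_mono)
  show "cumulative p \<longlonglongrightarrow> 1" using assms by (simp add: is_distribution_def cumulative_tendsto)
qed

lemma is_distribution_le_1:
  assumes "is_distribution p" shows "p k \<le> 1"
  using cumulative_le_1[OF assms, of "Suc k"] cumulative_mono[of p 0 k] assms
  by (simp add: cumulative_Suc is_distribution_def cumulative_def)

lemma quantile_eq_iff:
  assumes p: "is_distribution p" and v: "0 < v" "v < 1"
  shows "quantile p v = k \<longleftrightarrow> cumulative p k \<le> v \<and> v < cumulative p (Suc k)"
proof -
  have p_nonneg: "\<forall>k. 0 \<le> p k" using p by (simp add: is_distribution_def)
  obtain n where "v < cumulative p n"
    using order_tendstoD(1)[OF cumulative_tendsto, of p v] p v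
    by (auto simp: is_distribution_def eventually_sequentially)
  then have ex: "\<exists>k. v < cumulative p (Suc k)" using v by (cases n) (auto simp: cumulative_def)
  let ?L = "LEAST k. v < cumulative p (Suc k)"
  have L_above: "v < cumulative p (Suc ?L)" using ex by (rule LeastI_ex)
  have L_below: "cumulative p ?L \<le> v"
  proof (cases ?L)
    case (Suc j) then show ?thesis using not_less_Least[of j "\<lambda>k. v < cumulative p (Suc k)"] by auto
  qed (use v in \<open>simp add: cumulative_def\<close>)
  show ?thesis
  proof
    assume "quantile p v = k" then show "cumulative p k \<le> v \<and> v < cumulative p (Suc k)"
      using L_above L_below by (simp add: quantile_def)
  next
    assume k: "cumulative p k \<le> v \<and> v < cumulative p (Suc k)"
    have "?L \<le> k" using k by (intro Least_le) auto
    moreover have "\<not> ?L < k"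
      using cumulative_mono[OF p_nonneg, of "Suc ?L" k] L_above k by auto
    ultimately show "quantile p v = k" by (simp add: quantile_def)
  qed
qed

lemma measurable_cumulative [measurable]:
  "(\<lambda>p. cumulative p n) \<in> borel_measurable (PiM UNIV (\<lambda>_::nat. borel :: real measure))"
  unfolding cumulative_def by measurable

lemma measurable_quantile_pair [measurable]:
  "(\<lambda>(p, v). quantile p v)
     \<in> measurable (PiM UNIV (\<lambda>_::nat. borel :: real measure) \<Otimes>\<^sub>M borel) (count_space UNIV)"
  unfolding quantile_def by measurable

lemma measurable_quantile [measurable]: "quantile p \<in> measurable borel (count_space UNIV)"
  unfolding quantile_def cumulative_def by measurable

lemma emeasure_quantile_vimage:
  assumes p: "is_distribution p"
  shows "emeasure unif01 (quantile p -` {k}) = ennreal (p k)"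
proof -
  let ?a = "cumulative p k" and ?b = "cumulative p (Suc k)"
  have p_nonneg: "\<forall>k. 0 \<le> p k" using p by (simp add: is_distribution_def)
  have ab: "0 \<le> ?a" "?a \<le> ?b" "?b \<le> 1"
    using cumulative_mono[OF p_nonneg, of 0 k] cumulative_le_1[OF p, of "Suc k"] cumulative_mono[OF p_nonneg, of k "Suc k"]
    by (auto simp: cumulative_def)
  have "{0<..<1} \<inter> quantile p -` {k} = {0<..<1} \<inter> {?a..<?b}"
    using quantile_eq_iff[OF p] by (auto simp del: greaterThanLessThan_iff) auto
  also have "\<dots> = {?a..<?b} - {0}"
    using ab by auto
  moreover have "quantile p -` {k} \<in> sets borel"
    using measurable_sets[OF measurable_quantile[of p], of "{k}"] by simp
  ultimately have "emeasure unif01 (quantile p -` {k}) = emeasure lborel ({?a..<?b} - {0})"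
    by (simp add: emeasure_unif01)
  also have "\<dots> = ennreal (?b - ?a)"
    using ab by (subst emeasure_Diff_null_set) auto
  finally show ?thesis by (simp add: cumulative_Suc)
qed

lemma distr_quantile:
  assumes "is_distribution p"
  shows "distr unif01 (count_space UNIV) (quantile p) = offspring_measure p"
proof (rule measure_eqI_countable[where A=UNIV])
  fix k :: nat
  have "emeasure (offspring_measure p) {k} = ennreal (p k)"
    unfolding offspring_measure_def
    by (subst emeasure_density) (auto simp: nn_integral_count_space_indicator ac_simps)
  then show "emeasure (distr unif01 (count_space UNIV) (quantile p)) {k}
      = emeasure (offspring_measure p) {k}"
    by (simp add: emeasure_distr emeasure_quantile_vimage[OF assms])
qed (auto simp: offspring_measure_def)

section \<open>Occupation numbers\<close>

definition finsupp :: "('a \<Rightarrow> nat) set" where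
  "finsupp = {h. finite {x. h x \<noteq> 0}}"

lemma zero_finsupp [simp]: "0 \<in> finsupp"
  by (simp add: finsupp_def)

lemma add_finsupp: "a \<in> finsupp \<Longrightarrow> b \<in> finsupp \<Longrightarrow> a + b \<in> finsupp"
  unfolding finsupp_def by (auto elim!: finite_subset[rotated] simp del: finite_Un intro: finite_UnI)

lemma countable_finsupp: "countable (finsupp :: ('a::countable \<Rightarrow> nat) set)"
proof -
  define graph_fun :: "('a \<times> nat) set \<Rightarrow> 'a \<Rightarrow> nat" where
    "graph_fun A = (\<lambda>x. \<Sum>{n. (x, n) \<in> A})" for A
  have "finsupp \<subseteq> graph_fun ` {A. finite A}"
  proof
    fix h :: "'a \<Rightarrow> nat" assume h: "h \<in> finsupp"
    let ?A = "(\<lambda>x. (x, h x)) ` {x. h x \<noteq> 0}"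
    have "{n. (x, n) \<in> ?A} = (if h x \<noteq> 0 then {h x} else {})" for x by auto
    then have "graph_fun ?A = h" by (simp add: graph_fun_def fun_eq_iff)
    moreover have "finite ?A" using h by (simp add: finsupp_def)
    ultimately show "h \<in> graph_fun ` {A. finite A}" by (intro image_eqI[where x="?A"]) auto
  qed
  moreover have "countable (graph_fun ` {A. finite A})"
    using countable_Collect_finite_subset[of "UNIV :: ('a \<times> nat) set"] by simp
  ultimately show ?thesis by (rule countable_subset)
qed

lemma measurable_finsupp_add:
  fixes a b :: "'m \<Rightarrow> 'a::countable \<Rightarrow> nat"
  assumes a: "a \<in> measurable M (count_space finsupp)" and b: "b \<in> measurable M (count_space finsupp)"
  shows "(\<lambda>m. a m + b m) \<in> measurable M (count_space finsupp)"
proof -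
  have "(\<lambda>m. (a m, b m)) \<in> measurable M (count_space finsupp \<Otimes>\<^sub>M count_space finsupp)"
    using a b by (rule measurable_Pair)
  then have pair: "(\<lambda>m. (a m, b m)) \<in> measurable M (count_space (finsupp \<times> finsupp))"
    by (simp add: pair_measure_countable countable_finsupp)
  have "(\<lambda>(x, y). x + y)
      \<in> measurable (count_space (finsupp \<times> finsupp)) (count_space (finsupp :: ('a \<Rightarrow> nat) set))"
    by (auto simp: measurable_count_space_eq1 add_finsupp)
  from measurable_compose[OF pair this] show ?thesis by simp
qed

lemma measurable_finsupp_sum:
  fixes f :: "'i \<Rightarrow> 'm \<Rightarrow> 'a::countable \<Rightarrow> nat"
  assumes "finite D" "\<And>d. d \<in> D \<Longrightarrow> f d \<in> measurable M (count_space finsupp)"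
  shows "(\<lambda>m. \<Sum>d\<in>D. f d m) \<in> measurable M (count_space finsupp)"
  using assms
proof (induction D rule: finite_induct)
  case (insert d D)
  have "(\<lambda>m. \<Sum>d\<in>insert d D. f d m) = (\<lambda>m. f d m + (\<Sum>d\<in>D. f d m))"
    by (simp only: sum.insert[OF insert.hyps])
  then show ?case using insert by (simp only:) (intro measurable_finsupp_add; simp)
qed (simp add: measurable_const)

lemma occ_Suc_Sigma:
  "occ \<omega> (Suc t) y = (\<Sum>(x, i)\<in>Sigma {x. occ \<omega> t x \<noteq> 0} (\<lambda>x. {..<occ \<omega> t x}).
      if x + fst (\<omega> (t, x, i)) = y then snd (\<omega> (t, x, i)) else 0)"
  if "finite {x. occ \<omega> t x \<noteq> 0}"
  using that by (simp add: sum.Sigma)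

lemma occ_support_image:
  assumes "finite {x. occ \<omega> t x \<noteq> 0}"
  shows "{y. occ \<omega> (Suc t) y \<noteq> 0}
    \<subseteq> (\<lambda>(x, i). x + fst (\<omega> (t, x, i))) ` Sigma {x. occ \<omega> t x \<noteq> 0} (\<lambda>x. {..<occ \<omega> t x})"
proof
  fix y assume "y \<in> {y. occ \<omega> (Suc t) y \<noteq> 0}"
  then obtain xi where "xi \<in> Sigma {x. occ \<omega> t x \<noteq> 0} (\<lambda>x. {..<occ \<omega> t x})"
    "(case xi of (x, i) \<Rightarrow> if x + fst (\<omega> (t, x, i)) = y then snd (\<omega> (t, x, i)) else 0) \<noteq> 0"
    unfolding mem_Collect_eq occ_Suc_Sigma[OF assms] by (rule sum.not_neutral_contains_not_neutral)
  then show "y \<in> (\<lambda>(x, i). x + fst (\<omega> (t, x, i))) ` Sigma {x. occ \<omega> t x \<noteq> 0} (\<lambda>x. {..<occ \<omega> t x})"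
    by (force split: if_splits prod.splits)
qed

lemma finite_occ_support: "finite {x. occ \<omega> t x \<noteq> 0}"
proof (induction t)
  case 0
  then show ?case by simp
next
  case (Suc t)
  then show ?case
    by (rule finite_subset[OF occ_support_image]) (intro finite_imageI finite_SigmaI, use Suc in auto)
qed

lemma occ_cong_past: "(\<And>j. fst j < t \<Longrightarrow> \<omega> j = \<omega>' j) \<Longrightarrow> occ \<omega> t = occ \<omega>' t"
proof (induction t)
  case (Suc t)
  then have "occ \<omega> t = occ \<omega>' t" "\<And>x i. \<omega> (t, x, i) = \<omega>' (t, x, i)" by auto
  then show ?case by (simp only: occ.simps)
qed simp

definition mass :: "('a \<Rightarrow> nat) \<Rightarrow> nat" where
  "mass h = (\<Sum>x\<in>{x. h x \<noteq> 0}. h x)"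

lemma pop_eq_mass: "pop \<omega> t = mass (occ \<omega> t)"
  by (simp add: pop_def mass_def)

lemma pop_0 [simp]: "pop \<omega> 0 = 1"
proof -
  have "{x. occ \<omega> 0 x \<noteq> 0} = {0}" by auto
  then show ?thesis by (simp add: pop_def)
qed

lemma pop_Suc:
  "pop \<omega> (Suc t) = (\<Sum>x\<in>{x. occ \<omega> t x \<noteq> 0}. \<Sum>i<occ \<omega> t x. snd (\<omega> (t, x, i)))"
proof -
  let ?T = "Sigma {x. occ \<omega> t x \<noteq> 0} (\<lambda>x. {..<occ \<omega> t x})"
  let ?Y = "(\<lambda>(x, i). x + fst (\<omega> (t, x, i))) ` ?T"
  let ?c = "\<lambda>x i y. if x + fst (\<omega> (t, x, i)) = y then snd (\<omega> (t, x, i)) else 0"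
  have finT: "finite ?T" using finite_occ_support[of \<omega> t] by auto
  then have finY: "finite ?Y" by auto
  have "pop \<omega> (Suc t) = (\<Sum>y\<in>?Y. occ \<omega> (Suc t) y)"
    unfolding pop_def
    by (rule sum.mono_neutral_left[OF finY occ_support_image[OF finite_occ_support]]) auto
  also have "\<dots> = (\<Sum>(x, i)\<in>?T. \<Sum>y\<in>?Y. ?c x i y)"
    by (simp only: occ_Suc_Sigma[OF finite_occ_support]) (subst sum.swap, simp add: case_prod_unfold)
  also have "\<dots> = (\<Sum>(x, i)\<in>?T. snd (\<omega> (t, x, i)))"
  proof (rule sum.cong[OF refl])
    fix xi assume xi: "xi \<in> ?T"
    obtain x i where xi_eq: "xi = (x, i)" by (cases xi)
    have "x + fst (\<omega> (t, x, i)) \<in> ?Y" using xi xi_eq by force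
    then show "(case xi of (x, i) \<Rightarrow> \<Sum>y\<in>?Y. ?c x i y) = (case xi of (x, i) \<Rightarrow> snd (\<omega> (t, x, i)))"
      using finY by (simp add: xi_eq sum.delta)
  qed
  also have "\<dots> = (\<Sum>x\<in>{x. occ \<omega> t x \<noteq> 0}. \<Sum>i<occ \<omega> t x. snd (\<omega> (t, x, i)))"
    using finite_occ_support[of \<omega> t] by (simp add: sum.Sigma)
  finally show ?thesis .
qed

lemma sum_fun_apply: "(\<Sum>a\<in>A. f a) x = (\<Sum>a\<in>A. f a x)"
  by (induction A rule: infinite_finite_induct) auto

lemma measurable_occ:
  fixes W :: "'m \<Rightarrow> (nat \<times> (int ^ 'd) \<times> nat \<Rightarrow> (int ^ 'd) \<times> nat)"
  assumes W: "\<And>j. (\<lambda>m. W m j) \<in> measurable M (count_space UNIV)"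
  shows "(\<lambda>m. occ (W m) t) \<in> measurable M (count_space finsupp)"
proof (induction t)
  case 0
  have "(\<lambda>x::int^'d. if x = 0 then 1 else 0 :: nat) \<in> finsupp" by (simp add: finsupp_def)
  then show ?case by (simp add: measurable_const)
next
  case (Suc t)
  define child :: "int ^ 'd \<Rightarrow> (int ^ 'd) \<times> nat \<Rightarrow> int ^ 'd \<Rightarrow> nat" where
    "child x c = (\<lambda>y. if x + fst c = y then snd c else 0)" for x c
  define next_occ where "next_occ h m = (\<lambda>y. \<Sum>x\<in>{x. h x \<noteq> 0}. \<Sum>i<h x.
      (if x + fst (W m (t, x, i)) = y then snd (W m (t, x, i)) else 0))" for h m
  have next_occ_eq: "next_occ h m = (\<Sum>x\<in>{x. h x \<noteq> 0}. \<Sum>i<h x. child x (W m (t, x, i)))" for h m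
    by (simp add: next_occ_def child_def fun_eq_iff sum_fun_apply)
  have "child x c \<in> finsupp" for x c
  proof -
    have "{y. child x c y \<noteq> 0} \<subseteq> {x + fst c}" by (auto simp: child_def)
    then show ?thesis unfolding finsupp_def by (simp add: finite_subset)
  qed
  then have "child x \<in> measurable (count_space UNIV) (count_space finsupp)" for x
    by (auto simp: measurable_count_space_eq1)
  then have "(\<lambda>m. next_occ h m) \<in> measurable M (count_space finsupp)" if "h \<in> finsupp" for h
    unfolding next_occ_eq using that
    by (intro measurable_finsupp_sum measurable_compose[OF W]) (auto simp: finsupp_def)
  then have "(\<lambda>m. next_occ (occ (W m) t) m) \<in> measurable M (count_space finsupp)"
    by (rule measurable_compose_countable'[OF _ Suc countable_finsupp])
  then show ?case by (simp add: next_occ_def)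
qed

lemma measurable_occ_comp:
  fixes W :: "'m \<Rightarrow> (nat \<times> (int ^ 'd) \<times> nat \<Rightarrow> (int ^ 'd) \<times> nat)"
  assumes W: "\<And>j. (\<lambda>m. W m j) \<in> measurable M (count_space UNIV)"
    and F: "\<And>h. F h \<in> space N"
  shows "(\<lambda>m. F (occ (W m) t)) \<in> measurable M N"
proof -
  have "F \<in> measurable (count_space finsupp) N" by (simp add: measurable_count_space_eq1 F)
  with measurable_occ[OF W] show ?thesis by (rule measurable_compose)
qed

section \<open>Realising the quenched law from a fixed noise\<close>

definition jump_law :: "(int ^ 'd) measure" where
  "jump_law = measure_pmf (pmf_of_set nbr_steps)"

definition noise_law :: "((int ^ 'd) \<times> real) measure" where
  "noise_law = jump_law \<Otimes>\<^sub>M unif01"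

abbreviation noise_on ::
  "(nat \<times> (int ^ 'd) \<times> nat) set \<Rightarrow> (nat \<times> (int ^ 'd) \<times> nat \<Rightarrow> (int ^ 'd) \<times> real) measure" where
  "noise_on J \<equiv> PiM J (\<lambda>_. noise_law)"

abbreviation "noise \<equiv> noise_on UNIV"

definition site_law ::
  "(nat \<times> (int ^ 'd) \<Rightarrow> nat \<Rightarrow> real) \<Rightarrow> nat \<times> (int ^ 'd) \<times> nat \<Rightarrow> ((int ^ 'd) \<times> nat) measure" where
  "site_law q j = jump_law \<Otimes>\<^sub>M offspring_measure (q (fst j, fst (snd j)))"

definition realize ::
  "(nat \<times> (int ^ 'd) \<Rightarrow> nat \<Rightarrow> real) \<Rightarrow> (nat \<times> (int ^ 'd) \<times> nat \<Rightarrow> (int ^ 'd) \<times> real)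
    \<Rightarrow> nat \<times> (int ^ 'd) \<times> nat \<Rightarrow> (int ^ 'd) \<times> nat" where
  "realize q u = (\<lambda>j. map_prod id (quantile (q (fst j, fst (snd j)))) (u j))"

lemma sets_jump_law [simp, measurable_cong]: "sets jump_law = sets (count_space UNIV)"
  by (simp add: jump_law_def)

lemma prob_space_noise_law: "prob_space noise_law"
  unfolding noise_law_def jump_law_def
  by (intro prob_space_pair prob_space_measure_pmf prob_space_unif01)

lemma space_noise_law [simp]: "space noise_law = UNIV"
  by (simp add: noise_law_def space_pair_measure jump_law_def)

lemma prob_space_noise: "prob_space noise"
  by (intro prob_space_PiM prob_space_noise_law)

lemma measurable_noise_component: "(\<lambda>x. x i) \<in> measurable (PiM I (\<lambda>_. noise_law)) noise_law"
  by (rule measurable_component_PiM) simp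

lemma measurable_fst_noise_law: "fst \<in> measurable noise_law (count_space UNIV)"
  unfolding noise_law_def using measurable_fst measurable_cong_sets[OF refl sets_jump_law] by blast

lemma measurable_snd_noise_law: "snd \<in> measurable noise_law borel"
  unfolding noise_law_def using measurable_snd measurable_cong_sets[OF refl sets_unif01] by blast

lemma sets_site_law [measurable_cong]: "sets (site_law q j) = sets (count_space UNIV)"
proof -
  have "sets (site_law q j) = sets (count_space UNIV \<Otimes>\<^sub>M count_space (UNIV :: nat set))"
    unfolding site_law_def by (rule sets_pair_measure_cong) (simp_all add: offspring_measure_def)
  also have "count_space UNIV \<Otimes>\<^sub>M count_space UNIV = count_space (UNIV :: ((int ^ 'd) \<times> nat) set)"
    by (subst pair_measure_countable) auto
  finally show ?thesis .
qed

lemma measurable_map_prod_quantile: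
  "map_prod id (quantile p) \<in> measurable noise_law (count_space UNIV)"
proof -
  have "(\<lambda>w. (fst w, quantile p (snd w))) \<in> measurable noise_law (count_space UNIV)"
    by (rule measurable_Pair_countable[OF measurable_fst_noise_law
          measurable_compose[OF measurable_snd_noise_law measurable_quantile]])
  then show ?thesis by (simp add: map_prod_def split_def)
qed

lemma measurable_realize_component:
  "(\<lambda>u. realize q u j) \<in> measurable noise (site_law q j)"
  unfolding realize_def measurable_cong_sets[OF refl sets_site_law]
  by (rule measurable_compose[OF measurable_noise_component measurable_map_prod_quantile])

lemma distr_realize_component:
  assumes "is_distribution (q (fst j, fst (snd j)))"
  shows "distr noise (site_law q j) (\<lambda>u. realize q u j) = site_law q j"
proof -
  let ?p = "q (fst j, fst (snd j))"
  have quantile: "quantile ?p \<in> measurable unif01 (count_space UNIV)"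
    by (subst measurable_cong_sets[OF sets_unif01 refl]) (rule measurable_quantile)
  have map: "map_prod id (quantile ?p) \<in> measurable noise_law (site_law q j)"
    using measurable_map_prod_quantile by (subst measurable_cong_sets[OF refl sets_site_law])
  have "distr noise (site_law q j) (\<lambda>u. realize q u j)
      = distr (distr noise noise_law (\<lambda>u. u j)) (site_law q j) (map_prod id (quantile ?p))"
    unfolding realize_def by (subst distr_distr) (auto simp: map comp_def measurable_noise_component)
  also have "distr noise noise_law (\<lambda>u. u j) = noise_law"
    by (rule distr_PiM_component) (auto simp: prob_space_noise_law)
  also have "distr noise_law (site_law q j) (map_prod id (quantile ?p))
      = distr (jump_law \<Otimes>\<^sub>M unif01) (jump_law \<Otimes>\<^sub>M count_space UNIV) (\<lambda>(x, y). (id x, quantile ?p y))"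
    by (rule distr_cong) (auto simp: noise_law_def site_law_def map_prod_def sets_pair_measure_cong
        offspring_measure_def)
  also have "\<dots> = distr jump_law jump_law id \<Otimes>\<^sub>M distr unif01 (count_space UNIV) (quantile ?p)"
    using prob_space.prob_space_distr[OF prob_space_unif01 quantile]
    by (intro pair_measure_distr[symmetric] quantile) (simp_all add: prob_space_imp_sigma_finite)
  also have "\<dots> = site_law q j"
    using assms by (simp add: site_law_def distr_quantile id_def)
  finally show ?thesis .
qed

lemma quenched_law_realize:
  assumes "\<And>i. is_distribution (q i)"
  shows "quenched_law q = distr noise (PiM UNIV (site_law q)) (realize q)"
proof -
  interpret N: prob_space noise by (rule prob_space_noise)
  have "N.indep_vars (\<lambda>_. noise_law) (\<lambda>i \<omega>. \<omega> i) UNIV"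
    using indep_vars_PiM_components[of UNIV "\<lambda>_. noise_law"] prob_space_noise_law by simp
  then have "N.indep_vars (site_law q) (\<lambda>j u. realize q u j) UNIV"
    unfolding realize_def
    by (rule N.indep_vars_compose2)
       (subst measurable_cong_sets[OF refl sets_site_law], rule measurable_map_prod_quantile)
  then have "distr noise (PiM UNIV (site_law q)) (\<lambda>u. \<lambda>j\<in>UNIV. realize q u j)
      = PiM UNIV (\<lambda>j. distr noise (site_law q j) (\<lambda>u. realize q u j))"
    using N.indep_vars_iff_distr_eq_PiM[where I=UNIV and M'="site_law q" and X="\<lambda>j u. realize q u j",
        OF UNIV_not_empty measurable_realize_component]
    by simp
  also have "\<dots> = PiM UNIV (site_law q)"
    using assms by (simp add: distr_realize_component)
  also have "\<dots> = quenched_law q"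
    unfolding quenched_law_def site_law_def by (rule PiM_cong) (auto simp: jump_law_def)
  finally show ?thesis by (simp add: restrict_def)
qed

section \<open>The generating function of a sampled offspring number\<close>

definition quenched_pgf :: "real \<Rightarrow> (nat \<Rightarrow> real) \<Rightarrow> ennreal" where
  "quenched_pgf s p = (\<integral>\<^sup>+v. ennreal s ^ quantile p v \<partial>unif01)"

lemma quenched_pgf_le_1:
  assumes "0 \<le> s" "s \<le> 1" shows "quenched_pgf s p \<le> 1"
proof -
  interpret prob_space unif01 by (rule prob_space_unif01)
  have "ennreal s ^ n \<le> 1" for n using assms by (intro power_le_one) auto
  then have "quenched_pgf s p \<le> (\<integral>\<^sup>+v. 1 \<partial>unif01)"
    unfolding quenched_pgf_def by (intro nn_integral_mono)
  then show ?thesis using emeasure_space_1 by simp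
qed

lemma quenched_pgf_eq_suminf:
  assumes p: "is_distribution p" and s: "0 \<le> s"
  shows "quenched_pgf s p = (\<Sum>k. ennreal (p k * s ^ k))"
proof -
  have "quenched_pgf s p = (\<integral>\<^sup>+k. ennreal s ^ k \<partial>distr unif01 (count_space UNIV) (quantile p))"
    unfolding quenched_pgf_def by (subst nn_integral_distr) auto
  also have "\<dots> = (\<integral>\<^sup>+k. ennreal (p k) * ennreal s ^ k \<partial>count_space UNIV)"
    unfolding distr_quantile[OF p] offspring_measure_def by (subst nn_integral_density) auto
  also have "\<dots> = (\<Sum>k. ennreal (p k * s ^ k))"
    using p s by (simp add: nn_integral_count_space_nat ennreal_power ennreal_mult is_distribution_def)
  finally show ?thesis .
qed

lemma nn_integral_noise_law_snd:
  assumes g: "g \<in> borel_measurable borel"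
  shows "(\<integral>\<^sup>+w. g (snd w) \<partial>noise_law) = (\<integral>\<^sup>+v. g v \<partial>unif01)"
proof -
  interpret J: prob_space jump_law by (simp add: jump_law_def prob_space_measure_pmf)
  interpret U: prob_space unif01 by (rule prob_space_unif01)
  interpret pair_sigma_finite jump_law unif01 ..
  have "(\<lambda>w. g (snd w)) \<in> borel_measurable (jump_law \<Otimes>\<^sub>M unif01)"
    using g by measurable
  from U.nn_integral_fst[OF this] show ?thesis
    by (simp add: noise_law_def J.emeasure_space_1 eq_commute)
qed

section \<open>Branching random walk in an i.i.d.\ random environment\<close>

locale brwre =
  fixes \<mu> :: "(nat \<Rightarrow> real) measure"
    and Q :: "(nat \<times> (int ^ 'd) \<Rightarrow> nat \<Rightarrow> real) measure"
  assumes prob_space_mu: "prob_space \<mu>"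
    and sets_mu: "sets \<mu> = sets (PiM UNIV (\<lambda>_::nat. (borel :: real measure)))"
    and AE_distribution: "AE p in \<mu>. (\<forall>k. 0 \<le> p k) \<and> p sums 1"
    and Q_eq: "Q = PiM UNIV (\<lambda>_. \<mu>)"
begin

lemma space_mu [simp]: "space \<mu> = UNIV"
  using sets_eq_imp_space_eq[OF sets_mu] by (simp add: space_PiM)

lemma measurable_mu_component [measurable]: "(\<lambda>p. p k) \<in> borel_measurable \<mu>"
  by (subst measurable_cong_sets[OF sets_mu refl]) simp

lemma measurable_env_component: "(\<lambda>x. x i) \<in> measurable (PiM I (\<lambda>_. \<mu>)) \<mu>"
  by (rule measurable_component_PiM) simp

lemma prob_space_Q: "prob_space Q"
  unfolding Q_eq by (intro prob_space_PiM prob_space_mu)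

lemma AE_Q_distribution: "AE q in Q. \<forall>i. is_distribution (q i)"
proof -
  have "AE q in Q. is_distribution (q i)" for i
    unfolding Q_eq is_distribution_def
    by (rule AE_PiM_component[OF prob_space_mu]) (use AE_distribution in auto)
  then show ?thesis by (simp add: AE_all_countable)
qed

lemma measurable_quantile_comp:
  assumes "A \<in> measurable M \<mu>" and "B \<in> borel_measurable M"
  shows "(\<lambda>m. quantile (A m) (B m)) \<in> measurable M (count_space UNIV)"
proof -
  have "sets (\<mu> \<Otimes>\<^sub>M borel) = sets (PiM UNIV (\<lambda>_::nat. (borel :: real measure)) \<Otimes>\<^sub>M (borel :: real measure))"
    by (rule sets_pair_measure_cong[OF sets_mu refl])
  then have "(\<lambda>(p, v). quantile p v) \<in> measurable (\<mu> \<Otimes>\<^sub>M borel) (count_space UNIV)"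
    using measurable_quantile_pair measurable_cong_sets by blast
  from measurable_compose[OF measurable_Pair[OF assms] this] show ?thesis by simp
qed

lemma measurable_realize_comp:
  assumes "\<And>i. (\<lambda>m. A m i) \<in> measurable M \<mu>" and "\<And>j. (\<lambda>m. B m j) \<in> measurable M noise_law"
  shows "(\<lambda>m. realize (A m) (B m) j) \<in> measurable M (count_space UNIV)"
  unfolding realize_def map_prod_def split_def id_def using assms
  by (intro measurable_Pair_countable measurable_quantile_comp
        measurable_compose[OF _ measurable_fst_noise_law] measurable_compose[OF _ measurable_snd_noise_law])

lemma measurable_quenched_pgf: "quenched_pgf s \<in> borel_measurable \<mu>"
proof -
  interpret U: prob_space unif01 by (rule prob_space_unif01)
  have "(\<lambda>x. quantile (fst x) (snd x)) \<in> measurable (\<mu> \<Otimes>\<^sub>M unif01) (count_space UNIV)"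
    by (rule measurable_quantile_comp) auto
  then have "(\<lambda>(p, v). ennreal s ^ quantile p v) \<in> borel_measurable (\<mu> \<Otimes>\<^sub>M unif01)"
    by (simp add: case_prod_beta' measurable_compose[where N="count_space UNIV"])
  then show ?thesis unfolding quenched_pgf_def[abs_def] by (rule U.borel_measurable_nn_integral)
qed

lemma mean_offspring_eq: "mean_offspring Q k = (\<integral>p. p k \<partial>\<mu>)"
proof -
  have "(\<integral>p. p k \<partial>\<mu>) = (\<integral>p. p k \<partial>distr Q \<mu> (\<lambda>q. q (0, 0)))"
    unfolding Q_eq by (subst distr_PiM_component) (auto simp: prob_space_mu)
  also have "\<dots> = (\<integral>q. q (0, 0) k \<partial>Q)"
    by (rule integral_distr) (auto simp: Q_eq)
  finally show ?thesis by (simp add: mean_offspring_def)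
qed

lemma nn_integral_quenched_pgf_suminf:
  assumes s: "0 \<le> s" "s \<le> 1"
  shows "(\<integral>\<^sup>+p. quenched_pgf s p \<partial>\<mu>) = (\<Sum>k. ennreal (mean_offspring Q k * s ^ k))"
proof -
  interpret prob_space \<mu> by (rule prob_space_mu)
  have bound: "AE p in \<mu>. 0 \<le> p k * s ^ k \<and> p k * s ^ k \<le> 1" for k
    using AE_distribution
  proof eventually_elim
    case (elim p)
    then have "0 \<le> p k" "p k \<le> 1"
      using is_distribution_le_1[of p k] by (auto simp: is_distribution_def)
    moreover have "s ^ k \<le> 1" using s by (simp add: power_le_one)
    ultimately show ?case using s by (auto intro: mult_le_one)
  qed
  have "integrable \<mu> (\<lambda>p. p k * s ^ k)" for k
    using bound[of k] by (intro integrable_const_bound[where B=1]) (auto elim!: AE_mp)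
  then have integral_term: "(\<integral>\<^sup>+p. ennreal (p k * s ^ k) \<partial>\<mu>) = ennreal (mean_offspring Q k * s ^ k)" for k
    using bound[of k] by (subst nn_integral_eq_integral) (auto elim!: AE_mp simp: mean_offspring_eq)
  have "AE p in \<mu>. quenched_pgf s p = (\<Sum>k. ennreal (p k * s ^ k))"
    using AE_distribution by eventually_elim (use quenched_pgf_eq_suminf s in \<open>auto simp: is_distribution_def\<close>)
  then have "(\<integral>\<^sup>+p. quenched_pgf s p \<partial>\<mu>) = (\<integral>\<^sup>+p. (\<Sum>k. ennreal (p k * s ^ k)) \<partial>\<mu>)"
    by (rule nn_integral_cong_AE)
  also have "\<dots> = (\<Sum>k. \<integral>\<^sup>+p. ennreal (p k * s ^ k) \<partial>\<mu>)"
    by (rule nn_integral_suminf) measurable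
  finally show ?thesis by (simp add: integral_term)
qed

lemma summable_pgf_mean_offspring:
  assumes s: "0 \<le> s" "s \<le> 1"
  shows "summable (\<lambda>k. mean_offspring Q k * s ^ k)" and "\<And>k. 0 \<le> mean_offspring Q k * s ^ k"
proof -
  interpret prob_space \<mu> by (rule prob_space_mu)
  show nonneg: "0 \<le> mean_offspring Q k * s ^ k" for k
    unfolding mean_offspring_eq using AE_distribution s
    by (intro mult_nonneg_nonneg integral_nonneg_AE) (auto elim!: AE_mp)
  have "(\<integral>\<^sup>+p. quenched_pgf s p \<partial>\<mu>) \<le> (\<integral>\<^sup>+p. 1 \<partial>\<mu>)"
    by (intro nn_integral_mono quenched_pgf_le_1 s)
  then have "(\<Sum>k. ennreal (mean_offspring Q k * s ^ k)) \<noteq> \<top>"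
    using emeasure_space_1 by (auto simp: nn_integral_quenched_pgf_suminf[OF s] top_unique)
  then show "summable (\<lambda>k. mean_offspring Q k * s ^ k)"
    by (rule summable_suminf_not_top[OF nonneg])
qed

lemma nn_integral_quenched_pgf:
  assumes s: "0 \<le> s" "s \<le> 1"
  shows "(\<integral>\<^sup>+p. quenched_pgf s p \<partial>\<mu>) = ennreal (pgf (mean_offspring Q) s)"
  using summable_pgf_mean_offspring[OF s]
  by (simp add: nn_integral_quenched_pgf_suminf[OF s] suminf_ennreal2 pgf_def mult.commute)

lemma pgf_mean_offspring_bounds:
  assumes s: "0 \<le> s" "s \<le> 1"
  shows "0 \<le> pgf (mean_offspring Q) s" and "pgf (mean_offspring Q) s \<le> 1"
proof -
  interpret prob_space \<mu> by (rule prob_space_mu)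
  show nonneg: "0 \<le> pgf (mean_offspring Q) s"
    using summable_pgf_mean_offspring[OF s] by (simp add: pgf_def mult.commute suminf_nonneg)
  have "(\<integral>\<^sup>+p. quenched_pgf s p \<partial>\<mu>) \<le> (\<integral>\<^sup>+p. 1 \<partial>\<mu>)"
    by (intro nn_integral_mono quenched_pgf_le_1 s)
  then show "pgf (mean_offspring Q) s \<le> 1"
    using nonneg emeasure_space_1 by (simp add: nn_integral_quenched_pgf[OF s])
qed

lemma annealed_gf_realize:
  assumes s: "0 \<le> s"
  shows "annealed_gf Q t s = (\<integral>\<^sup>+q. \<integral>\<^sup>+u. ennreal s ^ pop (realize q u) t \<partial>noise \<partial>Q)"
  unfolding annealed_gf_def
proof (rule nn_integral_cong_AE)
  show "AE q in Q. (\<integral>\<^sup>+\<omega>. ennreal (s ^ pop \<omega> t) \<partial>quenched_law q)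
      = (\<integral>\<^sup>+u. ennreal s ^ pop (realize q u) t \<partial>noise)"
    using AE_Q_distribution
  proof eventually_elim
    case (elim q)
    have "realize q \<in> measurable noise (PiM UNIV (site_law q))"
    proof (rule measurable_PiM_single')
      show "(\<lambda>u. realize q u j) \<in> measurable noise (site_law q j)" for j
        by (rule measurable_realize_component)
    qed (auto simp: site_law_def space_pair_measure offspring_measure_def jump_law_def)
    moreover have "(\<lambda>\<omega>. \<omega> j) \<in> measurable (PiM UNIV (site_law q)) (count_space UNIV)" for j
      using measurable_component_singleton[of j UNIV "site_law q"]
      by (simp add: measurable_cong_sets[OF refl sets_site_law])
    then have "(\<lambda>\<omega>. ennreal s ^ pop \<omega> t) \<in> borel_measurable (PiM UNIV (site_law q))"
      unfolding pop_eq_mass by (rule measurable_occ_comp[where W="\<lambda>\<omega>. \<omega>"]) simp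
    ultimately show ?case
      using s by (simp add: quenched_law_realize[OF elim[rule_format]] nn_integral_distr ennreal_power)
  qed
qed

end

section \<open>One generation of the coupled process\<close>

definition before :: "nat \<Rightarrow> (nat \<times> 'a) set" where
  "before t = {j. fst j < t}"

definition offspring_weight ::
  "real \<Rightarrow> nat \<Rightarrow> (nat \<times> (int ^ 'd) \<Rightarrow> nat \<Rightarrow> real) \<Rightarrow> (nat \<times> (int ^ 'd) \<Rightarrow> nat \<Rightarrow> real)
    \<Rightarrow> (nat \<times> (int ^ 'd) \<times> nat \<Rightarrow> (int ^ 'd) \<times> real) \<Rightarrow> (nat \<times> (int ^ 'd) \<times> nat \<Rightarrow> (int ^ 'd) \<times> real)
    \<Rightarrow> ennreal" where
  "offspring_weight s t aq bq au bu =
    (\<Prod>x\<in>{x. occ (realize aq au) t x \<noteq> 0}. \<Prod>i<occ (realize aq au) t x.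
       ennreal s ^ quantile (bq (t, x)) (snd (bu (t, x, i))))"

text \<open>In \<open>offspring_weight s t aq bq au bu\<close> the environment \<open>aq\<close> and noise \<open>au\<close> before time \<open>t\<close>
  fix the particles alive at time \<open>t\<close>; \<open>bq\<close> and \<open>bu\<close>, from time \<open>t\<close> on, fix their offspring.\<close>

lemma occ_realize_before:
  "occ (realize q u) t = occ (realize (restrict q (before t)) (restrict u (before t))) t"
  by (rule occ_cong_past) (auto simp: realize_def before_def)

lemma power_pop_Suc_realize:
  assumes "0 \<le> s"
  shows "ennreal s ^ pop (realize q u) (Suc t)
    = offspring_weight s t (restrict q (before t)) (restrict q (UNIV - before t))
        (restrict u (before t)) (restrict u (UNIV - before t))"
  unfolding pop_Suc offspring_weight_def power_sum occ_realize_before[symmetric]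
  by (simp add: realize_def before_def)

lemma nn_integral_offspring_weight_noise:
  fixes aq :: "nat \<times> (int ^ 'd) \<Rightarrow> nat \<Rightarrow> real"
  shows "(\<integral>\<^sup>+bu. offspring_weight s t aq bq au bu \<partial>noise_on (UNIV - before t))
    = (\<Prod>x\<in>{x. occ (realize aq au) t x \<noteq> 0}. quenched_pgf s (bq (t, x)) ^ occ (realize aq au) t x)"
proof -
  define n where "n = occ (realize aq au) t"
  define S where "S = {x. n x \<noteq> 0}"
  define D where "D = (\<lambda>(x, i). (t, x, i)) ` Sigma S (\<lambda>x. {..<n x})"
  define f where "f j w = ennreal s ^ quantile (bq (t, fst (snd j))) (snd w)"
    for j :: "nat \<times> (int ^ 'd) \<times> nat" and w :: "(int ^ 'd) \<times> real"
  have inj: "inj_on (\<lambda>(x, i). (t, x, i)) (Sigma S (\<lambda>x. {..<n x}))"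
    by (auto simp: inj_on_def)
  have finS: "finite S" unfolding S_def n_def by (rule finite_occ_support)
  then have finite_Sigma: "finite (Sigma S (\<lambda>x. {..<n x}))" by auto
  have "offspring_weight s t aq bq au bu
      = (\<Prod>(x, i)\<in>Sigma S (\<lambda>x. {..<n x}). ennreal s ^ quantile (bq (t, x)) (snd (bu (t, x, i))))" for bu
    unfolding offspring_weight_def n_def[symmetric] S_def[symmetric] using finS by (simp add: prod.Sigma)
  also have "\<dots> bu = (\<Prod>j\<in>D. f j (bu j))" for bu
    unfolding D_def by (subst prod.reindex[OF inj]) (simp add: f_def case_prod_unfold)
  finally have weight_eq: "offspring_weight s t aq bq au bu = (\<Prod>j\<in>D. f j (bu j))" for bu .
  have "(\<integral>\<^sup>+bu. offspring_weight s t aq bq au bu \<partial>noise_on (UNIV - before t))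
      = (\<integral>\<^sup>+bu. (\<Prod>j\<in>D. f j (bu j)) \<partial>noise_on (UNIV - before t))"
    by (simp add: weight_eq)
  also have "\<dots> = (\<Prod>j\<in>D. \<integral>\<^sup>+w. f j w \<partial>noise_law)"
  proof (rule nn_integral_PiM_prod)
    show "finite D" unfolding D_def using finite_Sigma by simp
    show "D \<subseteq> UNIV - before t" by (auto simp: D_def before_def)
    show "f j \<in> borel_measurable noise_law" for j
      unfolding f_def[abs_def]
      by (intro measurable_compose[OF measurable_compose[OF measurable_snd_noise_law measurable_quantile]])
         simp
  qed (simp add: prob_space_noise_law)
  also have "\<dots> = (\<Prod>j\<in>D. quenched_pgf s (bq (t, fst (snd j))))"
    unfolding f_def quenched_pgf_def by (intro prod.cong refl nn_integral_noise_law_snd) simp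
  also have "\<dots> = (\<Prod>(x, i)\<in>Sigma S (\<lambda>x. {..<n x}). quenched_pgf s (bq (t, x)))"
    unfolding D_def by (subst prod.reindex[OF inj]) (simp add: case_prod_unfold)
  also have "\<dots> = (\<Prod>x\<in>S. quenched_pgf s (bq (t, x)) ^ n x)"
    using finS by (simp add: prod.Sigma[symmetric])
  finally show ?thesis by (simp add: S_def n_def)
qed

context brwre
begin

abbreviation env_on :: "(nat \<times> (int ^ 'd)) set \<Rightarrow> (nat \<times> (int ^ 'd) \<Rightarrow> nat \<Rightarrow> real) measure" where
  "env_on J \<equiv> PiM J (\<lambda>_. \<mu>)"

lemma measurable_occ_realize:
  assumes "\<And>i. (\<lambda>m. A m i) \<in> measurable M \<mu>" and "\<And>j. (\<lambda>m. B m j) \<in> measurable M noise_law"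
  shows "(\<lambda>m. occ (realize (A m) (B m)) t) \<in> measurable M (count_space finsupp)"
  by (rule measurable_occ) (rule measurable_realize_comp[OF assms])

lemma measurable_mass_occ_realize:
  assumes "\<And>i. (\<lambda>m. A m i) \<in> measurable M \<mu>" and "\<And>j. (\<lambda>m. B m j) \<in> measurable M noise_law"
  shows "(\<lambda>m. g (mass (occ (realize (A m) (B m)) t)) :: ennreal) \<in> borel_measurable M"
  using measurable_occ_realize[OF assms]
  by (rule measurable_compose) (simp add: measurable_count_space_eq1)

lemma measurable_offspring_weight:
  fixes Aq Bq :: "'m \<Rightarrow> nat \<times> (int ^ 'd) \<Rightarrow> nat \<Rightarrow> real"
  assumes A: "\<And>i. (\<lambda>m. Aq m i) \<in> measurable M \<mu>" and B: "\<And>i. (\<lambda>m. Bq m i) \<in> measurable M \<mu>"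
    and C: "\<And>j. (\<lambda>m. Au m j) \<in> measurable M noise_law" and D: "\<And>j. (\<lambda>m. Bu m j) \<in> measurable M noise_law"
  shows "(\<lambda>m. offspring_weight s t (Aq m) (Bq m) (Au m) (Bu m)) \<in> borel_measurable M"
proof -
  have "(\<lambda>m. ennreal s ^ quantile (Bq m (t, x)) (snd (Bu m (t, x, i)))) \<in> borel_measurable M" for x i
    by (intro measurable_compose[OF measurable_quantile_comp[OF B measurable_compose[OF D measurable_snd_noise_law]]])
       simp
  then have "(\<lambda>m. \<Prod>x\<in>{x. h x \<noteq> 0}. \<Prod>i<h x. ennreal s ^ quantile (Bq m (t, x)) (snd (Bu m (t, x, i))))
      \<in> borel_measurable M" for h :: "int ^ 'd \<Rightarrow> nat"
    by (intro borel_measurable_prod_ennreal)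
  from measurable_compose_countable'[OF this measurable_occ_realize[OF A C] countable_finsupp]
  show ?thesis by (simp add: offspring_weight_def)
qed

end

context brwre
begin

text \<open>Jensen's inequality at each site alive at time \<open>t\<close>; the sites see independent environments.\<close>

lemma power_mass_le_offspring_weight:
  fixes aq :: "nat \<times> (int ^ 'd) \<Rightarrow> nat \<Rightarrow> real"
  assumes s: "0 \<le> s" "s \<le> 1"
  shows "ennreal (pgf (mean_offspring Q) s) ^ mass (occ (realize aq au) t)
    \<le> (\<integral>\<^sup>+bq. \<integral>\<^sup>+bu. offspring_weight s t aq bq au bu \<partial>noise_on (UNIV - before t) \<partial>env_on (UNIV - before t))"
proof -
  define n where "n = occ (realize aq au) t"
  define S where "S = {x. n x \<noteq> 0}"
  have finS: "finite S" unfolding S_def n_def by (rule finite_occ_support)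
  have inj: "inj_on (Pair t) S" by (auto simp: inj_on_def)
  have "ennreal (pgf (mean_offspring Q) s) ^ mass n = (\<Prod>x\<in>S. ennreal (pgf (mean_offspring Q) s) ^ n x)"
    by (simp add: power_sum mass_def S_def)
  also have "\<dots> \<le> (\<Prod>x\<in>S. \<integral>\<^sup>+p. quenched_pgf s p ^ n x \<partial>\<mu>)"
  proof (rule prod_mono_ennreal)
    fix x
    have "ennreal (pgf (mean_offspring Q) s) ^ n x = (\<integral>\<^sup>+p. quenched_pgf s p \<partial>\<mu>) ^ n x"
      by (simp add: nn_integral_quenched_pgf[OF s])
    also have "\<dots> \<le> (\<integral>\<^sup>+p. quenched_pgf s p ^ n x \<partial>\<mu>)"
      by (rule power_nn_integral_le[OF prob_space_mu measurable_quenched_pgf quenched_pgf_le_1[OF s]])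
    finally show "ennreal (pgf (mean_offspring Q) s) ^ n x \<le> (\<integral>\<^sup>+p. quenched_pgf s p ^ n x \<partial>\<mu>)" .
  qed
  also have "\<dots> = (\<Prod>j\<in>Pair t ` S. \<integral>\<^sup>+p. quenched_pgf s p ^ n (snd j) \<partial>\<mu>)"
    by (simp add: prod.reindex[OF inj])
  also have "\<dots> = (\<integral>\<^sup>+bq. (\<Prod>j\<in>Pair t ` S. quenched_pgf s (bq j) ^ n (snd j)) \<partial>env_on (UNIV - before t))"
    using finS measurable_quenched_pgf
    by (intro nn_integral_PiM_prod[symmetric]) (auto simp: before_def prob_space_mu)
  also have "\<dots> = (\<integral>\<^sup>+bq. \<integral>\<^sup>+bu. offspring_weight s t aq bq au bu \<partial>noise_on (UNIV - before t)
      \<partial>env_on (UNIV - before t))"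
    by (subst prod.reindex[OF inj]) (simp add: nn_integral_offspring_weight_noise S_def n_def)
  finally show ?thesis by (simp add: n_def)
qed

lemma nn_integral_pop_realize:
  "(\<integral>\<^sup>+q. \<integral>\<^sup>+u. g (pop (realize q u) t) \<partial>noise \<partial>Q)
    = (\<integral>\<^sup>+aq. \<integral>\<^sup>+au. g (mass (occ (realize aq au) t)) \<partial>noise_on (before t) \<partial>env_on (before t))"
proof -
  have noise_part: "(\<integral>\<^sup>+u. g (pop (realize q u) t) \<partial>noise)
      = (\<integral>\<^sup>+au. g (mass (occ (realize (restrict q (before t)) au) t)) \<partial>noise_on (before t))" for q
  proof -
    have "(\<integral>\<^sup>+u. g (pop (realize q u) t) \<partial>noise)
        = (\<integral>\<^sup>+u. g (mass (occ (realize (restrict q (before t)) (restrict u (before t))) t)) \<partial>noise)"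
      by (simp add: pop_eq_mass occ_realize_before[of q])
    also have "\<dots> = (\<integral>\<^sup>+au. g (mass (occ (realize (restrict q (before t)) au) t)) \<partial>noise_on (before t))"
      using prob_space_noise_law
      by (intro nn_integral_PiM_restrict measurable_mass_occ_realize measurable_noise_component) auto
    finally show ?thesis .
  qed
  interpret N: prob_space "noise_on (before t)"
    using prob_space_noise_law by (intro prob_space_PiM)
  have "(\<lambda>(aq, au). g (mass (occ (realize aq au) t))) \<in> borel_measurable (env_on (before t) \<Otimes>\<^sub>M noise_on (before t))"
    unfolding case_prod_beta
    by (intro measurable_mass_occ_realize measurable_compose[OF measurable_fst measurable_env_component]
          measurable_compose[OF measurable_snd measurable_noise_component])
  then have "(\<lambda>aq. \<integral>\<^sup>+au. g (mass (occ (realize aq au) t)) \<partial>noise_on (before t)) \<in> borel_measurable (env_on (before t))"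
    by (rule N.borel_measurable_nn_integral)
  then show ?thesis
    unfolding noise_part Q_eq using prob_space_mu by (intro nn_integral_PiM_restrict) auto
qed

end

context brwre
begin

lemma nn_integral_noise_power_pop_Suc:
  fixes q :: "nat \<times> (int ^ 'd) \<Rightarrow> nat \<Rightarrow> real"
  assumes s: "0 \<le> s"
  shows "(\<integral>\<^sup>+u. ennreal s ^ pop (realize q u) (Suc t) \<partial>noise)
    = (\<integral>\<^sup>+au. \<integral>\<^sup>+bu. offspring_weight s t (restrict q (before t)) (restrict q (UNIV - before t)) au bu
         \<partial>noise_on (UNIV - before t) \<partial>noise_on (before t))"
proof -
  have "(\<lambda>(au, bu). offspring_weight s t (restrict q (before t)) (restrict q (UNIV - before t)) au bu)
      \<in> borel_measurable (noise_on (before t) \<Otimes>\<^sub>M noise_on (UNIV - before t))"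
    unfolding case_prod_beta
    by (intro measurable_offspring_weight measurable_const
          measurable_compose[OF measurable_fst measurable_noise_component]
          measurable_compose[OF measurable_snd measurable_noise_component]) simp_all
  from nn_integral_PiM_split[OF prob_space_noise_law subset_UNIV UNIV_not_empty this]
  show ?thesis by (simp add: power_pop_Suc_realize[OF s])
qed

lemma nn_integral_Q_offspring_weight:
  "(\<integral>\<^sup>+q. \<integral>\<^sup>+au. \<integral>\<^sup>+bu. offspring_weight s t (restrict q (before t)) (restrict q (UNIV - before t)) au bu
       \<partial>noise_on (UNIV - before t) \<partial>noise_on (before t) \<partial>Q)
    = (\<integral>\<^sup>+aq. \<integral>\<^sup>+bq. \<integral>\<^sup>+au. \<integral>\<^sup>+bu. offspring_weight s t aq bq au bu
         \<partial>noise_on (UNIV - before t) \<partial>noise_on (before t) \<partial>env_on (UNIV - before t) \<partial>env_on (before t))"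
    (is "_ = (\<integral>\<^sup>+aq. \<integral>\<^sup>+bq. \<integral>\<^sup>+au. \<integral>\<^sup>+bu. ?w aq bq au bu \<partial>?NA \<partial>?NB \<partial>?EA \<partial>?EB)")
proof -
  interpret NB: prob_space ?NB using prob_space_noise_law by (intro prob_space_PiM)
  interpret NA: prob_space ?NA using prob_space_noise_law by (intro prob_space_PiM)
  have "(\<lambda>m. ?w (fst (fst (fst m))) (snd (fst (fst m))) (snd (fst m)) (snd m))
      \<in> borel_measurable (((?EB \<Otimes>\<^sub>M ?EA) \<Otimes>\<^sub>M ?NB) \<Otimes>\<^sub>M ?NA)"
    by (intro measurable_offspring_weight
          measurable_compose[OF measurable_fst measurable_compose[OF measurable_fst
            measurable_compose[OF measurable_fst measurable_env_component]]]
          measurable_compose[OF measurable_fst measurable_compose[OF measurable_fst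
            measurable_compose[OF measurable_snd measurable_env_component]]]
          measurable_compose[OF measurable_fst measurable_compose[OF measurable_snd measurable_noise_component]]
          measurable_compose[OF measurable_snd measurable_noise_component])
  then have "case_prod (\<lambda>x bu. ?w (fst (fst x)) (snd (fst x)) (snd x) bu)
      \<in> borel_measurable (((?EB \<Otimes>\<^sub>M ?EA) \<Otimes>\<^sub>M ?NB) \<Otimes>\<^sub>M ?NA)"
    by (simp add: case_prod_beta')
  from NA.borel_measurable_nn_integral[OF this]
  have "case_prod (\<lambda>z au. \<integral>\<^sup>+bu. ?w (fst z) (snd z) au bu \<partial>?NA) \<in> borel_measurable ((?EB \<Otimes>\<^sub>M ?EA) \<Otimes>\<^sub>M ?NB)"
    by (simp add: case_prod_beta')
  from NB.borel_measurable_nn_integral[OF this]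
  have "(\<lambda>z. \<integral>\<^sup>+au. \<integral>\<^sup>+bu. ?w (fst z) (snd z) au bu \<partial>?NA \<partial>?NB) \<in> borel_measurable (?EB \<Otimes>\<^sub>M ?EA)" .
  from nn_integral_PiM_split[OF prob_space_mu subset_UNIV UNIV_not_empty this]
  show ?thesis by (simp add: Q_eq)
qed

lemma nn_integral_offspring_weight_swap:
  fixes aq :: "nat \<times> (int ^ 'd) \<Rightarrow> nat \<Rightarrow> real"
  shows   "(\<integral>\<^sup>+bq. \<integral>\<^sup>+au. \<integral>\<^sup>+bu. offspring_weight s t aq bq au bu
       \<partial>noise_on (UNIV - before t) \<partial>noise_on (before t) \<partial>env_on (UNIV - before t))
    = (\<integral>\<^sup>+au. \<integral>\<^sup>+bq. \<integral>\<^sup>+bu. offspring_weight s t aq bq au bu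
         \<partial>noise_on (UNIV - before t) \<partial>env_on (UNIV - before t) \<partial>noise_on (before t))"
    (is "_ = (\<integral>\<^sup>+au. \<integral>\<^sup>+bq. \<integral>\<^sup>+bu. ?w bq au bu \<partial>?NA \<partial>?EA \<partial>?NB)")
proof -
  interpret NB: prob_space ?NB using prob_space_noise_law by (intro prob_space_PiM)
  interpret NA: prob_space ?NA using prob_space_noise_law by (intro prob_space_PiM)
  interpret EA: prob_space ?EA using prob_space_mu by (intro prob_space_PiM)
  interpret EA_NB: pair_sigma_finite ?EA ?NB ..
  have "(\<lambda>m. ?w (fst (fst m)) (snd (fst m)) (snd m)) \<in> borel_measurable ((?EA \<Otimes>\<^sub>M ?NB) \<Otimes>\<^sub>M ?NA)"
    by (intro measurable_offspring_weight measurable_const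
          measurable_compose[OF measurable_fst measurable_compose[OF measurable_fst measurable_env_component]]
          measurable_compose[OF measurable_fst measurable_compose[OF measurable_snd measurable_noise_component]]
          measurable_compose[OF measurable_snd measurable_noise_component]) simp
  then have "case_prod (\<lambda>x bu. ?w (fst x) (snd x) bu) \<in> borel_measurable ((?EA \<Otimes>\<^sub>M ?NB) \<Otimes>\<^sub>M ?NA)"
    by (simp add: case_prod_beta')
  from NA.borel_measurable_nn_integral[OF this]
  have "case_prod (\<lambda>bq au. \<integral>\<^sup>+bu. ?w bq au bu \<partial>?NA) \<in> borel_measurable (?EA \<Otimes>\<^sub>M ?NB)"
    by (simp add: case_prod_beta')
  from EA_NB.Fubini'[OF this] show ?thesis by simp
qed

lemma nn_integral_power_pop_Suc_realize:
  assumes s: "0 \<le> s"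
  shows "(\<integral>\<^sup>+q. \<integral>\<^sup>+u. ennreal s ^ pop (realize q u) (Suc t) \<partial>noise \<partial>Q)
    = (\<integral>\<^sup>+aq. \<integral>\<^sup>+au. \<integral>\<^sup>+bq. \<integral>\<^sup>+bu. offspring_weight s t aq bq au bu
         \<partial>noise_on (UNIV - before t) \<partial>env_on (UNIV - before t) \<partial>noise_on (before t) \<partial>env_on (before t))"
  by (simp add: nn_integral_noise_power_pop_Suc[OF s] nn_integral_Q_offspring_weight
      nn_integral_offspring_weight_swap)

end

context brwre
begin

lemma pgf_power_pop_le_power_pop_Suc:
  assumes s: "0 \<le> s" "s \<le> 1"
  shows "(\<integral>\<^sup>+q. \<integral>\<^sup>+u. ennreal (pgf (mean_offspring Q) s) ^ pop (realize q u) t \<partial>noise \<partial>Q)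
    \<le> (\<integral>\<^sup>+q. \<integral>\<^sup>+u. ennreal s ^ pop (realize q u) (Suc t) \<partial>noise \<partial>Q)"
  unfolding nn_integral_pop_realize[of "\<lambda>n. ennreal (pgf (mean_offspring Q) s) ^ n"]
    nn_integral_power_pop_Suc_realize[OF s(1)]
  by (intro nn_integral_mono power_mass_le_offspring_weight[OF s])

lemma funpow_pgf_le_power_pop:
  assumes "0 \<le> s" "s \<le> 1"
  shows "ennreal ((pgf (mean_offspring Q) ^^ t) s) \<le> (\<integral>\<^sup>+q. \<integral>\<^sup>+u. ennreal s ^ pop (realize q u) t \<partial>noise \<partial>Q)"
  using assms
proof (induction t arbitrary: s)
  case 0
  interpret Q: prob_space Q by (rule prob_space_Q)
  interpret N: prob_space noise by (rule prob_space_noise)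
  show ?case by (simp add: Q.emeasure_space_1 N.emeasure_space_1)
next
  case (Suc t)
  let ?f = "pgf (mean_offspring Q)"
  have "ennreal ((?f ^^ Suc t) s) = ennreal ((?f ^^ t) (?f s))"
    by (simp only: funpow_Suc_right comp_def)
  also have "\<dots> \<le> (\<integral>\<^sup>+q. \<integral>\<^sup>+u. ennreal (?f s) ^ pop (realize q u) t \<partial>noise \<partial>Q)"
    using Suc.IH pgf_mean_offspring_bounds[OF Suc.prems] by blast
  also have "\<dots> \<le> (\<integral>\<^sup>+q. \<integral>\<^sup>+u. ennreal s ^ pop (realize q u) (Suc t) \<partial>noise \<partial>Q)"
    by (rule pgf_power_pop_le_power_pop_Suc[OF Suc.prems])
  finally show ?case .
qed

lemma annealed_gf_ge_funpow_pgf: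
  assumes "0 \<le> s" "s \<le> 1"
  shows "ennreal ((pgf (mean_offspring Q) ^^ t) s) \<le> annealed_gf Q t s"
  using funpow_pgf_le_power_pop[OF assms] by (simp add: annealed_gf_realize[OF assms(1)])

end

theorem lemma4p6p3:
  fixes \<mu> :: "(nat \<Rightarrow> real) measure"
    and Q :: "(nat \<times> (int ^ 'd) \<Rightarrow> nat \<Rightarrow> real) measure"
    and s :: real and t :: nat
  assumes "prob_space \<mu>"
    and "sets \<mu> = sets (PiM UNIV (\<lambda>_::nat. (borel :: real measure)))"
    and "AE p in \<mu>. (\<forall>k. 0 \<le> p k) \<and> p sums 1"
    and "Q = PiM UNIV (\<lambda>_::nat \<times> (int ^ 'd). \<mu>)"
    and "0 \<le> s" and "s \<le> 1"
  shows "ennreal ((pgf (mean_offspring Q) ^^ t) s) \<le> annealed_gf Q t s"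
proof -
  interpret brwre \<mu> Q using assms(1-4) by (rule brwre.intro)
  show ?thesis using assms(5,6) by (rule annealed_gf_ge_funpow_pgf)
qed

end
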